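(* Let $1 \to \mathbf{Z} \to \mathbf{G} \xrightarrow{\pi} \mathbf{H} \to 1$ be a short exact sequence of groups (so $\mathbf{Z} = \ker\pi$ and $\pi$ is surjective), and let $\Delta$ be a poset with a bottom element $O$. Let $\Pi \colon \mathbf{G}^{\Delta} \to \mathbf{H}^{\Delta}$ be the functor induced by $\pi$, and let $\widetilde{\mathbf{H}^{\Delta}}$ be a subcategory of $\mathbf{H}^{\Delta}$ containing all objects of $\mathbf{H}^{\Delta}$ such that every hom-set $\mathrm{Hom}_{\widetilde{\mathbf{H}^{\Delta}}}(U,V)$ consists of exactly one morphism (in particular every endomorphism monoid in $\widetilde{\mathbf{H}^{\Delta}}$ is trivial). Let $\widetilde{\mathbf{G}^{\Delta}}$ be the pull-back of $\Pi$ along the inclusion $\iota \colon \widetilde{\mathbf{H}^{\Delta}} \to \mathbf{H}^{\Delta}$. Then for any objects $U$ and $V$ of $\widetilde{\mathbf{G}^{\Delta}}$, the map $\eta \mapsto \eta_O$ is a bijection from the hom-set $\mathrm{Hom}_{\widetilde{\mathbf{G}^{\Delta}}}(U,V)$ onto a coset of $\mathbf{Z}$ in $\mathbf{G}$.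
   Context: Groups are regarded as single-object categories whose morphisms are the group elements; a poset is a category with one morphism $x \to y$ iff $x \le y$, and a bottom element $O$ satisfies $O\le x$ for all $x$. For a group $\mathbf{K}$, $\mathbf{K}^{\Delta}$ is the category of functors $\Delta \to \mathbf{K}$ and natural transformations; a natural transformation $\eta\colon F\to F'$ in $\mathbf{G}^{\Delta}$ is determined by its component $\eta_O\in\mathbf{G}$, which can be any element of $\mathbf{G}$. The functor $\Pi$ sends an object $F$ to $\pi \circ F$ and a morphism $\eta$ to the natural transformation $\pi\eta$ with components $\pi(\eta_x)$ (the paper describes $\Pi$ as "the identity on objects", identifying $F$ with $\pi\circ F$). Concretely, $\widetilde{\mathbf{G}^{\Delta}}$ is the category whose objects are the objects $F$ of $\mathbf{G}^{\Delta}$ and whose morphisms $F \to F'$ are the natural transformations $\eta \colon F \to F'$ in $\mathbf{G}^{\Delta}$ such that $\Pi(\eta)$ is a morphism of $\widetilde{\mathbf{H}^{\Delta}}$. *)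

theory Defs
  imports "HOL-Algebra.Algebra"
begin

definition pos_arrows :: "'d set \<Rightarrow> ('d \<Rightarrow> 'd \<Rightarrow> bool) \<Rightarrow> ('d \<times> 'd) set" where
  "pos_arrows D leq = {(x, y). x \<in> D \<and> y \<in> D \<and> leq x y}"

definition is_poset :: "'d set \<Rightarrow> ('d \<Rightarrow> 'd \<Rightarrow> bool) \<Rightarrow> bool" where
  "is_poset D leq \<longleftrightarrow> (\<forall>x\<in>D. leq x x) \<and>
     (\<forall>x\<in>D. \<forall>y\<in>D. leq x y \<and> leq y x \<longrightarrow> x = y) \<and>
     (\<forall>x\<in>D. \<forall>y\<in>D. \<forall>z\<in>D. leq x y \<and> leq y z \<longrightarrow> leq x z)"

definition is_bottom :: "'d set \<Rightarrow> ('d \<Rightarrow> 'd \<Rightarrow> bool) \<Rightarrow> 'd \<Rightarrow> bool" where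
  "is_bottom D leq o0 \<longleftrightarrow> o0 \<in> D \<and> (\<forall>x\<in>D. leq o0 x)"

text \<open>Objects of K^\<Delta>: functors \<Delta> \<rightarrow> K (K a group viewed as a one-object
  category), i.e. a group element F(x,y) for each arrow x <= y, with identities
  sent to 1 and composites sent to products.\<close>

definition diag_functor :: "('g, 'm) monoid_scheme \<Rightarrow> 'd set \<Rightarrow> ('d \<Rightarrow> 'd \<Rightarrow> bool)
    \<Rightarrow> ('d \<times> 'd \<Rightarrow> 'g) \<Rightarrow> bool" where
  "diag_functor K D leq F \<longleftrightarrow>
     F \<in> extensional (pos_arrows D leq) \<and>
     (\<forall>p\<in>pos_arrows D leq. F p \<in> carrier K) \<and>
     (\<forall>x\<in>D. F (x, x) = \<one>\<^bsub>K\<^esub>) \<and>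
     (\<forall>x\<in>D. \<forall>y\<in>D. \<forall>z\<in>D. leq x y \<and> leq y z \<longrightarrow> F (x, z) = F (y, z) \<otimes>\<^bsub>K\<^esub> F (x, y))"

text \<open>Morphisms of K^\<Delta>: natural transformations, given by their components.\<close>

definition diag_nat :: "('g, 'm) monoid_scheme \<Rightarrow> 'd set \<Rightarrow> ('d \<Rightarrow> 'd \<Rightarrow> bool)
    \<Rightarrow> ('d \<times> 'd \<Rightarrow> 'g) \<Rightarrow> ('d \<times> 'd \<Rightarrow> 'g) \<Rightarrow> ('d \<Rightarrow> 'g) \<Rightarrow> bool" where
  "diag_nat K D leq F F' \<eta> \<longleftrightarrow>
     diag_functor K D leq F \<and> diag_functor K D leq F' \<and>
     \<eta> \<in> extensional D \<and> (\<forall>x\<in>D. \<eta> x \<in> carrier K) \<and>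
     (\<forall>x\<in>D. \<forall>y\<in>D. leq x y \<longrightarrow> F' (x, y) \<otimes>\<^bsub>K\<^esub> \<eta> x = \<eta> y \<otimes>\<^bsub>K\<^esub> F (x, y))"

definition Pi_obj :: "('g \<Rightarrow> 'h) \<Rightarrow> 'd set \<Rightarrow> ('d \<Rightarrow> 'd \<Rightarrow> bool)
    \<Rightarrow> ('d \<times> 'd \<Rightarrow> 'g) \<Rightarrow> ('d \<times> 'd \<Rightarrow> 'h)" where
  "Pi_obj \<pi> D leq F = (\<lambda>p\<in>pos_arrows D leq. \<pi> (F p))"

definition Pi_mor :: "('g \<Rightarrow> 'h) \<Rightarrow> 'd set \<Rightarrow> ('d \<Rightarrow> 'g) \<Rightarrow> ('d \<Rightarrow> 'h)" where
  "Pi_mor \<pi> D \<eta> = (\<lambda>x\<in>D. \<pi> (\<eta> x))"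

text \<open>A subcategory of K^\<Delta>, described by its morphism predicate HMor U V \<eta>,
  containing all objects of K^\<Delta> and with every hom-set a singleton.\<close>

definition singleton_hom_subcat :: "('h, 'm) monoid_scheme \<Rightarrow> 'd set \<Rightarrow> ('d \<Rightarrow> 'd \<Rightarrow> bool)
    \<Rightarrow> (('d \<times> 'd \<Rightarrow> 'h) \<Rightarrow> ('d \<times> 'd \<Rightarrow> 'h) \<Rightarrow> ('d \<Rightarrow> 'h) \<Rightarrow> bool) \<Rightarrow> bool" where
  "singleton_hom_subcat K D leq HMor \<longleftrightarrow>
     (\<forall>U V \<eta>. HMor U V \<eta> \<longrightarrow> diag_nat K D leq U V \<eta>) \<and>
     (\<forall>U. diag_functor K D leq U \<longrightarrow> HMor U U (\<lambda>x\<in>D. \<one>\<^bsub>K\<^esub>)) \<and>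
     (\<forall>U V W \<eta> \<theta>. HMor U V \<eta> \<longrightarrow> HMor V W \<theta> \<longrightarrow> HMor U W (\<lambda>x\<in>D. \<theta> x \<otimes>\<^bsub>K\<^esub> \<eta> x)) \<and>
     (\<forall>U V. diag_functor K D leq U \<and> diag_functor K D leq V \<longrightarrow> (\<exists>!\<eta>. HMor U V \<eta>))"

text \<open>Hom-sets of the pull-back of \<Pi> along the inclusion of the subcategory:
  natural transformations \<eta> in G^\<Delta> with \<Pi>(\<eta>) a morphism of the subcategory.\<close>

definition pb_hom :: "('g \<Rightarrow> 'h) \<Rightarrow> ('g, 'm) monoid_scheme \<Rightarrow> 'd set \<Rightarrow> ('d \<Rightarrow> 'd \<Rightarrow> bool)
    \<Rightarrow> (('d \<times> 'd \<Rightarrow> 'h) \<Rightarrow> ('d \<times> 'd \<Rightarrow> 'h) \<Rightarrow> ('d \<Rightarrow> 'h) \<Rightarrow> bool)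
    \<Rightarrow> ('d \<times> 'd \<Rightarrow> 'g) \<Rightarrow> ('d \<times> 'd \<Rightarrow> 'g) \<Rightarrow> ('d \<Rightarrow> 'g) set" where
  "pb_hom \<pi> G D leq HMor U V =
     {\<eta>. diag_nat G D leq U V \<eta> \<and> HMor (Pi_obj \<pi> D leq U) (Pi_obj \<pi> D leq V) (Pi_mor \<pi> D \<eta>)}"

end

theory Submission
  imports Defs
begin

text \<open>Naturality at the arrows O \<le> y shows that a natural transformation \<eta> in
  G^\<Delta> is determined by \<eta>_O, and every element of G occurs as \<eta>_O. Since every
  hom-set of the subcategory of H^\<Delta> is a singleton {\<theta>}, the pull-back hom-set
  consists of those \<eta> with \<Pi>(\<eta>) = \<theta>, i.e. (again by determination at O) with
  \<pi>(\<eta>_O) = \<theta>_O. Thus \<eta> \<mapsto> \<eta>_O maps it bijectively onto the fibre of \<pi>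
  over \<theta>_O, which is the coset Z g for any preimage g of \<theta>_O.\<close>

lemma diag_functor_closed:
  "diag_functor K D leq F \<Longrightarrow> x \<in> D \<Longrightarrow> y \<in> D \<Longrightarrow> leq x y \<Longrightarrow> F (x, y) \<in> carrier K"
  unfolding diag_functor_def pos_arrows_def by blast

lemma diag_functor_id: "diag_functor K D leq F \<Longrightarrow> x \<in> D \<Longrightarrow> F (x, x) = \<one>\<^bsub>K\<^esub>"
  unfolding diag_functor_def by blast

lemma diag_functor_comp:
  "diag_functor K D leq F \<Longrightarrow> x \<in> D \<Longrightarrow> y \<in> D \<Longrightarrow> z \<in> D \<Longrightarrow> leq x y \<Longrightarrow> leq y z
    \<Longrightarrow> F (x, z) = F (y, z) \<otimes>\<^bsub>K\<^esub> F (x, y)"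
  unfolding diag_functor_def by blast

lemma singleton_hom_subcat_diag_nat:
  "singleton_hom_subcat K D leq HMor \<Longrightarrow> HMor U V \<eta> \<Longrightarrow> diag_nat K D leq U V \<eta>"
  unfolding singleton_hom_subcat_def by blast

lemma singleton_hom_subcat_ex1:
  "singleton_hom_subcat K D leq HMor \<Longrightarrow> diag_functor K D leq U \<Longrightarrow> diag_functor K D leq V
    \<Longrightarrow> \<exists>!\<eta>. HMor U V \<eta>"
  unfolding singleton_hom_subcat_def by blast

text \<open>Naturality at the arrow O \<le> y, solved for \<eta>_y, with \<eta>_O = g.\<close>

definition nat_from_bottom :: "('g, 'm) monoid_scheme \<Rightarrow> 'd set
    \<Rightarrow> ('d \<times> 'd \<Rightarrow> 'g) \<Rightarrow> ('d \<times> 'd \<Rightarrow> 'g) \<Rightarrow> 'd \<Rightarrow> 'g \<Rightarrow> ('d \<Rightarrow> 'g)" where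
  "nat_from_bottom K D U V o0 g = (\<lambda>y\<in>D. V (o0, y) \<otimes>\<^bsub>K\<^esub> g \<otimes>\<^bsub>K\<^esub> inv\<^bsub>K\<^esub> U (o0, y))"

context group
begin

lemma diag_nat_eq_nat_from_bottom:
  fixes D :: "'p set"
  assumes \<eta>: "diag_nat G D leq U V \<eta>" and bot: "is_bottom D leq o0"
  shows "\<eta> = nat_from_bottom G D U V o0 (\<eta> o0)"
proof (rule extensionalityI)
  show "\<eta> \<in> extensional D" using \<eta> by (simp add: diag_nat_def)
  show "nat_from_bottom G D U V o0 (\<eta> o0) \<in> extensional D"
    by (simp add: nat_from_bottom_def)
next
  fix y assume y: "y \<in> D"
  have o: "o0 \<in> D" "leq o0 y" using bot y by (auto simp: is_bottom_def)
  have U: "U (o0, y) \<in> carrier G" and \<eta>y: "\<eta> y \<in> carrier G"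
    using \<eta> o y by (auto simp: diag_nat_def intro: diag_functor_closed)
  have "V (o0, y) \<otimes> \<eta> o0 = \<eta> y \<otimes> U (o0, y)"
    using \<eta> o y by (auto simp: diag_nat_def)
  then have "V (o0, y) \<otimes> \<eta> o0 \<otimes> inv U (o0, y) = \<eta> y"
    using U \<eta>y by (simp add: m_assoc)
  then show "\<eta> y = nat_from_bottom G D U V o0 (\<eta> o0) y"
    using y by (simp add: nat_from_bottom_def)
qed

lemma diag_nat_eqI_at_bottom:
  fixes D :: "'p set"
  assumes "diag_nat G D leq U V \<eta>" "diag_nat G D leq U V \<eta>'" "is_bottom D leq o0"
    and "\<eta> o0 = \<eta>' o0"
  shows "\<eta> = \<eta>'"
  using diag_nat_eq_nat_from_bottom[OF assms(1,3)] diag_nat_eq_nat_from_bottom[OF assms(2,3)]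
    assms(4) by simp

lemma nat_from_bottom_at_bottom:
  fixes D :: "'p set"
  assumes "diag_functor G D leq U" "diag_functor G D leq V" "is_bottom D leq o0"
    and "g \<in> carrier G"
  shows "nat_from_bottom G D U V o0 g o0 = g"
  using assms by (simp add: nat_from_bottom_def is_bottom_def diag_functor_id)

lemma diag_nat_nat_from_bottom:
  fixes D :: "'p set"
  assumes U: "diag_functor G D leq U" and V: "diag_functor G D leq V"
    and bot: "is_bottom D leq o0" and g: "g \<in> carrier G"
  shows "diag_nat G D leq U V (nat_from_bottom G D U V o0 g)"
proof -
  have o: "o0 \<in> D" "\<And>x. x \<in> D \<Longrightarrow> leq o0 x" using bot by (auto simp: is_bottom_def)
  note closed = diag_functor_closed[OF U] diag_functor_closed[OF V]
  show ?thesis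
    unfolding diag_nat_def
  proof (intro conjI ballI impI)
    fix x assume "x \<in> D"
    then show "nat_from_bottom G D U V o0 g x \<in> carrier G"
      using closed o g by (simp add: nat_from_bottom_def)
  next
    fix x y assume xy: "x \<in> D" "y \<in> D" "leq x y"
    have "U (o0, y) = U (x, y) \<otimes> U (o0, x)" "V (o0, y) = V (x, y) \<otimes> V (o0, x)"
      using diag_functor_comp[OF U] diag_functor_comp[OF V] o xy by blast+
    then have "V (x, y) \<otimes> (V (o0, x) \<otimes> g \<otimes> inv U (o0, x))
        = V (o0, y) \<otimes> g \<otimes> inv U (o0, y) \<otimes> U (x, y)"
      using closed o xy g by (simp add: inv_mult_group m_assoc)
    then show "V (x, y) \<otimes> nat_from_bottom G D U V o0 g x
        = nat_from_bottom G D U V o0 g y \<otimes> U (x, y)"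
      using xy by (simp add: nat_from_bottom_def)
  qed (use U V in \<open>simp_all add: nat_from_bottom_def\<close>)
qed

lemma bij_betw_diag_nat_at_bottom:
  fixes D :: "'p set"
  assumes "diag_functor G D leq U" "diag_functor G D leq V" "is_bottom D leq o0"
  shows "bij_betw (\<lambda>\<eta>. \<eta> o0) {\<eta>. diag_nat G D leq U V \<eta>} (carrier G)"
proof (rule bij_betwI')
  show "\<eta> o0 = \<eta>' o0 \<longleftrightarrow> \<eta> = \<eta>'"
    if "\<eta> \<in> {\<eta>. diag_nat G D leq U V \<eta>}" "\<eta>' \<in> {\<eta>. diag_nat G D leq U V \<eta>}" for \<eta> \<eta>'
    using that diag_nat_eqI_at_bottom[of D leq U V \<eta> \<eta>' o0] assms(3) by auto
  show "\<eta> o0 \<in> carrier G" if "\<eta> \<in> {\<eta>. diag_nat G D leq U V \<eta>}" for \<eta>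
    using that assms(3) by (simp add: diag_nat_def is_bottom_def)
  show "\<exists>\<eta>\<in>{\<eta>. diag_nat G D leq U V \<eta>}. g = \<eta> o0" if "g \<in> carrier G" for g
    using diag_nat_nat_from_bottom[OF assms that] nat_from_bottom_at_bottom[OF assms that]
    by force
qed

end

context group_hom
begin

lemma diag_functor_Pi_obj:
  fixes D :: "'p set"
  assumes F: "diag_functor G D leq F" and "is_poset D leq"
  shows "diag_functor H D leq (Pi_obj h D leq F)"
  unfolding diag_functor_def
proof (intro conjI ballI impI)
  show "Pi_obj h D leq F \<in> extensional (pos_arrows D leq)" by (simp add: Pi_obj_def)
next
  fix p assume "p \<in> pos_arrows D leq"
  then show "Pi_obj h D leq F p \<in> carrier H"
    using diag_functor_closed[OF F] by (auto simp: Pi_obj_def pos_arrows_def)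
next
  fix x assume "x \<in> D"
  moreover have "leq x x" using \<open>x \<in> D\<close> assms(2) by (simp add: is_poset_def)
  ultimately show "Pi_obj h D leq F (x, x) = \<one>\<^bsub>H\<^esub>"
    using diag_functor_id[OF F] by (simp add: Pi_obj_def pos_arrows_def)
next
  fix x y z assume xyz: "x \<in> D" "y \<in> D" "z \<in> D" "leq x y \<and> leq y z"
  moreover have "leq x z" using xyz assms(2) unfolding is_poset_def by blast
  ultimately show "Pi_obj h D leq F (x, z) = Pi_obj h D leq F (y, z) \<otimes>\<^bsub>H\<^esub> Pi_obj h D leq F (x, y)"
    using diag_functor_closed[OF F] diag_functor_comp[OF F, of x y z]
    by (simp add: Pi_obj_def pos_arrows_def)
qed

lemma diag_nat_Pi_mor:
  fixes D :: "'p set"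
  assumes \<eta>: "diag_nat G D leq U V \<eta>" and "is_poset D leq"
  shows "diag_nat H D leq (Pi_obj h D leq U) (Pi_obj h D leq V) (Pi_mor h D \<eta>)"
  unfolding diag_nat_def
proof (intro conjI ballI impI)
  show "diag_functor H D leq (Pi_obj h D leq U)" "diag_functor H D leq (Pi_obj h D leq V)"
    using \<eta> assms(2) by (simp_all add: diag_nat_def diag_functor_Pi_obj)
next
  fix x y assume xy: "x \<in> D" "y \<in> D" "leq x y"
  have closed: "U (x, y) \<in> carrier G" "V (x, y) \<in> carrier G" "\<eta> x \<in> carrier G" "\<eta> y \<in> carrier G"
    using \<eta> xy by (auto simp: diag_nat_def intro: diag_functor_closed)
  have "V (x, y) \<otimes>\<^bsub>G\<^esub> \<eta> x = \<eta> y \<otimes>\<^bsub>G\<^esub> U (x, y)" using \<eta> xy by (simp add: diag_nat_def)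
  then have "h (V (x, y)) \<otimes>\<^bsub>H\<^esub> h (\<eta> x) = h (\<eta> y) \<otimes>\<^bsub>H\<^esub> h (U (x, y))"
    using closed by (metis hom_mult)
  then show "Pi_obj h D leq V (x, y) \<otimes>\<^bsub>H\<^esub> Pi_mor h D \<eta> x
      = Pi_mor h D \<eta> y \<otimes>\<^bsub>H\<^esub> Pi_obj h D leq U (x, y)"
    using xy by (simp add: Pi_obj_def Pi_mor_def pos_arrows_def)
qed (use \<eta> in \<open>auto simp: Pi_mor_def diag_nat_def\<close>)

lemma kernel_rcos_eq_fibre:
  assumes "g \<in> carrier G"
  shows "kernel G H h #>\<^bsub>G\<^esub> g = {x \<in> carrier G. h x = h g}"
proof (intro equalityI subsetI)
  fix x assume "x \<in> kernel G H h #>\<^bsub>G\<^esub> g"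
  then show "x \<in> {x \<in> carrier G. h x = h g}"
    using assms by (auto simp: r_coset_def kernel_def)
next
  fix x assume x: "x \<in> {x \<in> carrier G. h x = h g}"
  then have "x \<otimes>\<^bsub>G\<^esub> inv\<^bsub>G\<^esub> g \<in> kernel G H h"
    using assms by (simp add: kernel_def)
  moreover have "x = x \<otimes>\<^bsub>G\<^esub> inv\<^bsub>G\<^esub> g \<otimes>\<^bsub>G\<^esub> g" using x assms by (simp add: G.m_assoc)
  ultimately show "x \<in> kernel G H h #>\<^bsub>G\<^esub> g" unfolding r_coset_def by blast
qed

lemma pb_hom_eq_fibre_at_bottom:
  fixes D :: "'p set"
  assumes sub: "singleton_hom_subcat H D leq HMor"
    and \<theta>_mor: "HMor (Pi_obj h D leq U) (Pi_obj h D leq V) \<theta>"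
    and "is_poset D leq" and bot: "is_bottom D leq o0"
  shows "pb_hom h G D leq HMor U V = {\<eta> \<in> {\<eta>. diag_nat G D leq U V \<eta>}. h (\<eta> o0) = \<theta> o0}"
proof -
  have o: "o0 \<in> D" using bot by (simp add: is_bottom_def)
  have \<theta>_nat: "diag_nat H D leq (Pi_obj h D leq U) (Pi_obj h D leq V) \<theta>"
    using \<theta>_mor by (rule singleton_hom_subcat_diag_nat[OF sub])
  have "\<exists>!\<theta>. HMor (Pi_obj h D leq U) (Pi_obj h D leq V) \<theta>"
    using singleton_hom_subcat_ex1[OF sub] \<theta>_nat by (simp add: diag_nat_def)
  then have unique: "\<theta>' = \<theta>" if "HMor (Pi_obj h D leq U) (Pi_obj h D leq V) \<theta>'" for \<theta>'
    using \<theta>_mor that by blast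
  have "HMor (Pi_obj h D leq U) (Pi_obj h D leq V) (Pi_mor h D \<eta>) \<longleftrightarrow> h (\<eta> o0) = \<theta> o0"
    if \<eta>: "diag_nat G D leq U V \<eta>" for \<eta>
  proof
    assume "HMor (Pi_obj h D leq U) (Pi_obj h D leq V) (Pi_mor h D \<eta>)"
    then show "h (\<eta> o0) = \<theta> o0" using unique o by (metis Pi_mor_def restrict_apply')
  next
    assume "h (\<eta> o0) = \<theta> o0"
    then have "Pi_mor h D \<eta> = \<theta>"
      using H.diag_nat_eqI_at_bottom[OF diag_nat_Pi_mor[OF \<eta> assms(3)] \<theta>_nat bot] o
      by (simp add: Pi_mor_def)
    then show "HMor (Pi_obj h D leq U) (Pi_obj h D leq V) (Pi_mor h D \<eta>)" using \<theta>_mor by simp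
  qed
  then show ?thesis by (auto simp: pb_hom_def)
qed

end

theorem proposition4:
  fixes G :: "('g, 'a) monoid_scheme" and H :: "('h, 'b) monoid_scheme"
    and \<pi> :: "'g \<Rightarrow> 'h" and D :: "'d set" and leq :: "'d \<Rightarrow> 'd \<Rightarrow> bool" and o0 :: 'd
    and HMor :: "('d \<times> 'd \<Rightarrow> 'h) \<Rightarrow> ('d \<times> 'd \<Rightarrow> 'h) \<Rightarrow> ('d \<Rightarrow> 'h) \<Rightarrow> bool"
    and U V :: "'d \<times> 'd \<Rightarrow> 'g"
  assumes "group G" and "group H"
    and "\<pi> \<in> hom G H" and "\<pi> ` carrier G = carrier H"
    and "is_poset D leq" and "is_bottom D leq o0"
    and "singleton_hom_subcat H D leq HMor"
    and "diag_functor G D leq U" and "diag_functor G D leq V"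
  shows "\<exists>g\<in>carrier G.
           bij_betw (\<lambda>\<eta>. \<eta> o0) (pb_hom \<pi> G D leq HMor U V) (kernel G H \<pi> #>\<^bsub>G\<^esub> g)"
proof -
  interpret group_hom G H \<pi>
    using assms(1-3) by (simp add: group_hom_def group_hom_axioms_def)
  obtain \<theta> where \<theta>_mor: "HMor (Pi_obj \<pi> D leq U) (Pi_obj \<pi> D leq V) \<theta>"
    using singleton_hom_subcat_ex1[OF assms(7)] diag_functor_Pi_obj assms(5,8,9) by blast
  then have "\<theta> o0 \<in> carrier H"
    using singleton_hom_subcat_diag_nat[OF assms(7)] assms(6)
    by (auto simp: diag_nat_def is_bottom_def)
  then obtain g where g: "g \<in> carrier G" "\<pi> g = \<theta> o0" using assms(4) by (metis imageE)
  have "bij_betw (\<lambda>\<eta>. \<eta> o0) {\<eta> \<in> {\<eta>. diag_nat G D leq U V \<eta>}. \<pi> (\<eta> o0) = \<theta> o0}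
      {x \<in> carrier G. \<pi> x = \<pi> g}"
    by (rule bij_betw_Collect[OF G.bij_betw_diag_nat_at_bottom[OF assms(8,9,6)]]) (simp add: g(2))
  then have "bij_betw (\<lambda>\<eta>. \<eta> o0) (pb_hom \<pi> G D leq HMor U V) (kernel G H \<pi> #>\<^bsub>G\<^esub> g)"
    by (simp only: pb_hom_eq_fibre_at_bottom[OF assms(7) \<theta>_mor assms(5,6)] kernel_rcos_eq_fibre[OF g(1)])
  then show ?thesis using g(1) by blast
qed

end
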